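(* Let $m\ge 2$ and $N\ge 1$ be integers, let $J_1,\dots,J_{m-1}\in\{1,-1\}$, and let $\zeta^-_1,\dots,\zeta^-_{m-1}\in\mathcal{P}_N^-$ and $f^+\in\mathcal{P}_N^+$ with $f^+(0)\neq 0$. Consider the system of conditions, for an unknown vector $(x_1,\dots,x_m)^T$ of functions on $\mathbb{T}$, \[ \begin{cases} \zeta^-_k\,x_m - J_k\, f^+\,\widetilde{x_k}\in\mathcal{P}^+, & k=1,\dots,m-1,\\ \zeta^-_1x_1+\zeta^-_2x_2+\dots+\zeta^-_{m-1}x_{m-1}+f^+\,\widetilde{x_m}\in\mathcal{P}^+. \end{cases} \] Let $\mathbf{u}=(u_1,\dots,u_m)^T\in(\mathcal{P}_N^+)^{m\times 1}$ and $\mathbf{v}=(v_1,\dots,v_m)^T\in(\mathcal{P}_N^+)^{m\times 1}$ be two (possibly identical) solutions of this system, i.e. all conditions hold when $x_i=u_i$ for all $i$, and also when $x_i=v_i$ for all $i$. Then \[ \sum_{k=1}^{m-1}J_k\,u_k\,\widetilde{v_k}+\widetilde{u_m}\,v_m \] is a constant function on $\mathbb{T}$.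
   Context: $\mathbb{T}=\{z\in\mathbb{C}:|z|=1\}$. $\mathcal{P}$ denotes the set of Laurent polynomials $P(z)=\sum_{k=-n}^{m}p_kz^k$ (with complex coefficients, viewed as functions on $\mathbb{T}$), and $\mathcal{P}^+$ the set of (ordinary) polynomials $\sum_{k\ge 0}p_kz^k$. $\mathcal{P}_N$ is the set of Laurent polynomials $\sum_{k=-n}^{m}p_kz^k$ with $0\le n,m\le N$, and $\mathcal{P}_N^+=\mathcal{P}_N\cap\mathcal{P}^+$. For $P(z)=\sum_{k=-n}^m p_kz^k$, $\widetilde{P}(z)=\sum_{k=-n}^m\overline{p_k}z^{-k}$ (so $\widetilde{P}(z)=\overline{P(z)}$ for $z\in\mathbb{T}$). $\mathcal{P}_N^-=\{P:\widetilde{P}\in\mathcal{P}_N^+\}$. *)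

theory Defs
  imports Complex_Main
begin

text \<open>Laurent polynomials are viewed as functions on the unit circle T:
  a function f :: complex => complex is identified with its restriction to T.\<close>

definition circle :: "complex set" where
  "circle = {z. norm z = 1}"

definition LaurentN :: "nat \<Rightarrow> (complex \<Rightarrow> complex) set" where
  "LaurentN N = {f. \<exists>n m p. n \<le> N \<and> m \<le> N \<and>
      (\<forall>z\<in>circle. f z = (\<Sum>k\<in>{-int n..int m}. p k * z powi k))}"

definition Pplus :: "(complex \<Rightarrow> complex) set" where
  "Pplus = {f. \<exists>m p. \<forall>z\<in>circle. f z = (\<Sum>k\<le>m. p k * z ^ k)}"

definition PplusN :: "nat \<Rightarrow> (complex \<Rightarrow> complex) set" where
  "PplusN N = LaurentN N \<inter> Pplus"

text \<open>tilde P: on T it equals the complex conjugate of P.\<close>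
definition tilde :: "(complex \<Rightarrow> complex) \<Rightarrow> complex \<Rightarrow> complex" where
  "tilde f = (\<lambda>z. cnj (f z))"

definition PminusN :: "nat \<Rightarrow> (complex \<Rightarrow> complex) set" where
  "PminusN N = {f. tilde f \<in> PplusN N}"

text \<open>For a polynomial f in P^+, the value f(0) is its constant coefficient.\<close>
definition poly_at_zero_nonzero :: "(complex \<Rightarrow> complex) \<Rightarrow> bool" where
  "poly_at_zero_nonzero f \<longleftrightarrow>
     (\<exists>m p. (\<forall>z\<in>circle. f z = (\<Sum>k\<le>m. p k * z ^ k)) \<and> p 0 \<noteq> 0)"

definition is_solution ::
  "nat \<Rightarrow> (nat \<Rightarrow> int) \<Rightarrow> (nat \<Rightarrow> complex \<Rightarrow> complex) \<Rightarrow> (complex \<Rightarrow> complex)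
     \<Rightarrow> (nat \<Rightarrow> complex \<Rightarrow> complex) \<Rightarrow> bool" where
  "is_solution m J \<zeta> f x \<longleftrightarrow>
     (\<forall>k\<in>{1..m-1}. (\<lambda>z. \<zeta> k z * x m z - of_int (J k) * f z * tilde (x k) z) \<in> Pplus) \<and>
     (\<lambda>z. (\<Sum>k=1..m-1. \<zeta> k z * x k z) + f z * tilde (x m) z) \<in> Pplus"

end

theory Submission
  imports Defs "HOL-Computational_Algebra.Polynomial"
begin

text \<open>Write S for the form in question. Combining the conditions for \<open>u\<close> and \<open>v\<close> gives
  \<open>f S = v\<^sub>m B(u) - \<Sum>\<^sub>k u\<^sub>k A\<^sub>k(v)\<close>, where \<open>B(u)\<close> and \<open>A\<^sub>k(v)\<close> are the
  left-hand sides of the last and of the k-th condition; hence \<open>f S \<in> P\<^sup>+\<close>. As a Laurent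
  polynomial, S can only have a pole at 0, which multiplication by f cannot cancel because
  \<open>f(0) \<noteq> 0\<close>; so \<open>S \<in> P\<^sup>+\<close>. Exchanging u and v replaces S by its conjugate, so
  \<open>S\<close> and \<open>conj S\<close> are both polynomials on the circle, which forces S to be constant.\<close>

lemma Pplus_iff_poly: "g \<in> Pplus \<longleftrightarrow> (\<exists>P. \<forall>z\<in>circle. g z = poly P z)"
proof
  assume "g \<in> Pplus"
  then obtain m p where "\<forall>z\<in>circle. g z = (\<Sum>k\<le>m. p k * z ^ k)"
    by (auto simp: Pplus_def)
  then have "\<forall>z\<in>circle. g z = poly (\<Sum>k\<le>m. monom (p k) k) z"
    by (simp add: poly_sum poly_monom)
  then show "\<exists>P. \<forall>z\<in>circle. g z = poly P z" by blast
next
  assume "\<exists>P. \<forall>z\<in>circle. g z = poly P z"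
  then obtain P where "\<forall>z\<in>circle. g z = (\<Sum>k\<le>degree P. coeff P k * z ^ k)"
    by (auto simp: poly_altdef)
  then show "g \<in> Pplus" unfolding Pplus_def by blast
qed

lemma circle_nonzero: "z \<in> circle \<Longrightarrow> z \<noteq> 0"
  by (auto simp: circle_def)

lemma cnj_eq_inverse_on_circle: "z \<in> circle \<Longrightarrow> cnj z = inverse z"
  using complex_norm_square[of z] circle_nonzero[of z]
  by (simp add: circle_def field_simps)

lemma infinite_circle: "infinite circle"
proof
  assume "finite circle"
  define h where "h = (\<lambda>x::real. Complex x (sqrt (1 - x\<^sup>2)))"
  have "h ` {0..1} \<subseteq> circle"
    by (auto simp: circle_def h_def norm_complex_def power_le_one)
  moreover have "inj_on h {0..1}"
    by (auto simp: inj_on_def h_def)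
  ultimately have "finite {0..1::real}"
    using \<open>finite circle\<close> finite_subset finite_imageD by metis
  then show False using infinite_Icc[of "0::real" 1] by simp
qed

lemma poly_eq_if_eq_on_circle:
  assumes "\<forall>z\<in>circle. poly P z = poly Q z"
  shows "P = Q"
proof (rule ccontr)
  assume "P \<noteq> Q"
  then have "finite {z. poly (P - Q) z = 0}" by (intro poly_roots_finite) simp
  moreover have "circle \<subseteq> {z. poly (P - Q) z = 0}" using assms by auto
  ultimately show False using infinite_circle finite_subset by blast
qed

lemma Pplus_add: "g \<in> Pplus \<Longrightarrow> h \<in> Pplus \<Longrightarrow> (\<lambda>z. g z + h z) \<in> Pplus"
  unfolding Pplus_iff_poly by (metis poly_add)

lemma Pplus_diff: "g \<in> Pplus \<Longrightarrow> h \<in> Pplus \<Longrightarrow> (\<lambda>z. g z - h z) \<in> Pplus"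
  unfolding Pplus_iff_poly by (metis poly_diff)

lemma Pplus_mult: "g \<in> Pplus \<Longrightarrow> h \<in> Pplus \<Longrightarrow> (\<lambda>z. g z * h z) \<in> Pplus"
  unfolding Pplus_iff_poly by (metis poly_mult)

lemma Pplus_sum:
  "finite A \<Longrightarrow> (\<And>a. a \<in> A \<Longrightarrow> g a \<in> Pplus) \<Longrightarrow> (\<lambda>z. \<Sum>a\<in>A. g a z) \<in> Pplus"
proof (induction A rule: finite_induct)
  case empty
  show ?case unfolding Pplus_iff_poly by (metis poly_0 sum.empty)
next
  case (insert a A)
  then show ?case using Pplus_add[of "g a" "\<lambda>z. \<Sum>a\<in>A. g a z"] by simp
qed

lemma cnj_poly_on_circle:
  "z \<in> circle \<Longrightarrow> z ^ degree B * cnj (poly B z) = poly (reflect_poly (map_poly cnj B)) z"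
  by (simp add: poly_reflect_poly_nz circle_nonzero degree_map_poly cnj_eq_inverse_on_circle)

definition laurent_on_circle :: "(complex \<Rightarrow> complex) \<Rightarrow> bool" where
  "laurent_on_circle g \<longleftrightarrow> (\<exists>M T. \<forall>z\<in>circle. z ^ M * g z = poly T z)"

lemma laurent_on_circle_const: "laurent_on_circle (\<lambda>z. c)"
  unfolding laurent_on_circle_def by (intro exI[of _ 0] exI[of _ "[:c:]"]) simp

lemma laurent_on_circle_if_Pplus: "g \<in> Pplus \<Longrightarrow> laurent_on_circle g"
  unfolding Pplus_iff_poly laurent_on_circle_def by (metis power_0 mult_1)

lemma laurent_on_circle_cnj: "g \<in> Pplus \<Longrightarrow> laurent_on_circle (\<lambda>z. cnj (g z))"
  unfolding Pplus_iff_poly laurent_on_circle_def by (metis cnj_poly_on_circle)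

lemma laurent_on_circle_add:
  assumes "laurent_on_circle g" "laurent_on_circle h"
  shows "laurent_on_circle (\<lambda>z. g z + h z)"
proof -
  obtain M T M' T' where g: "\<forall>z\<in>circle. z ^ M * g z = poly T z"
    and h: "\<forall>z\<in>circle. z ^ M' * h z = poly T' z"
    using assms by (auto simp: laurent_on_circle_def)
  have "z ^ (M + M') * (g z + h z) = poly (monom 1 M' * T + monom 1 M * T') z"
    if "z \<in> circle" for z
  proof -
    have "z ^ (M + M') * (g z + h z) = z ^ M' * (z ^ M * g z) + z ^ M * (z ^ M' * h z)"
      by (simp add: algebra_simps power_add)
    then show ?thesis using g h that by (simp add: poly_monom)
  qed
  then show ?thesis unfolding laurent_on_circle_def by blast
qed

lemma laurent_on_circle_mult:
  assumes "laurent_on_circle g" "laurent_on_circle h"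
  shows "laurent_on_circle (\<lambda>z. g z * h z)"
proof -
  obtain M T M' T' where g: "\<forall>z\<in>circle. z ^ M * g z = poly T z"
    and h: "\<forall>z\<in>circle. z ^ M' * h z = poly T' z"
    using assms by (auto simp: laurent_on_circle_def)
  have "z ^ (M + M') * (g z * h z) = poly (T * T') z" if "z \<in> circle" for z
  proof -
    have "z ^ (M + M') * (g z * h z) = (z ^ M * g z) * (z ^ M' * h z)"
      by (simp add: algebra_simps power_add)
    then show ?thesis using g h that by simp
  qed
  then show ?thesis unfolding laurent_on_circle_def by blast
qed

lemma laurent_on_circle_sum:
  "finite A \<Longrightarrow> (\<And>a. a \<in> A \<Longrightarrow> laurent_on_circle (g a))
    \<Longrightarrow> laurent_on_circle (\<lambda>z. \<Sum>a\<in>A. g a z)"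
proof (induction A rule: finite_induct)
  case empty
  show ?case using laurent_on_circle_const[of 0] by simp
next
  case (insert a A)
  then show ?case using laurent_on_circle_add[of "g a" "\<lambda>z. \<Sum>a\<in>A. g a z"] by simp
qed

lemma poly_at_zero_nonzeroE:
  assumes "poly_at_zero_nonzero f"
  obtains F where "\<forall>z\<in>circle. f z = poly F z" and "poly F 0 \<noteq> 0"
proof -
  obtain n p where f: "\<forall>z\<in>circle. f z = (\<Sum>k\<le>n. p k * z ^ k)" and "p 0 \<noteq> 0"
    using assms by (auto simp: poly_at_zero_nonzero_def)
  define F where "F = (\<Sum>k\<le>n. monom (p k) k)"
  have "\<forall>z\<in>circle. f z = poly F z" using f by (simp add: F_def poly_sum poly_monom)
  moreover have "poly F 0 = p 0"
    by (simp add: F_def poly_0_coeff_0 coeff_sum coeff_monom)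
  ultimately show ?thesis using that \<open>p 0 \<noteq> 0\<close> by metis
qed

lemma Pplus_if_mult_Pplus:
  assumes "laurent_on_circle S" and "poly_at_zero_nonzero f" and "(\<lambda>z. f z * S z) \<in> Pplus"
  shows "S \<in> Pplus"
proof -
  obtain M T where T: "\<forall>z\<in>circle. z ^ M * S z = poly T z"
    using assms(1) by (auto simp: laurent_on_circle_def)
  obtain F where F: "\<forall>z\<in>circle. f z = poly F z" and F0: "poly F 0 \<noteq> 0"
    using assms(2) by (rule poly_at_zero_nonzeroE)
  obtain P where P: "\<forall>z\<in>circle. f z * S z = poly P z"
    using assms(3) by (auto simp: Pplus_iff_poly)
  have FT: "F * T = [:0, 1:] ^ M * P"
  proof (rule poly_eq_if_eq_on_circle, intro ballI)
    fix z assume "z \<in> circle"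
    then have "poly F z * poly T z = z ^ M * (f z * S z)"
      using T F by (metis mult.left_commute)
    then show "poly (F * T) z = poly ([:0, 1:] ^ M * P) z"
      using P \<open>z \<in> circle\<close> by (simp add: poly_power)
  qed
  have "[:0, 1:] ^ M dvd T"
  proof (cases "T = 0")
    case False
    have "F * T \<noteq> 0" using F0 False by auto
    moreover have "[:-0, 1:] ^ M dvd F * T" by (simp add: FT)
    ultimately have "M \<le> order 0 (F * T)" using order_divides by blast
    also have "\<dots> = order 0 T"
      \<comment> \<open>\<open>F\<close> does not vanish at 0, so it contributes nothing to the order of \<open>F * T\<close> there\<close>
      using order_mult[of F T 0] order_root[of F 0] F0 False by auto
    finally show ?thesis using order_divides[of 0 M T] by simp
  qed simp
  then obtain R where "T = [:0, 1:] ^ M * R" by blast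
  then have "\<forall>z\<in>circle. S z = poly R z"
    using T circle_nonzero by (simp add: poly_power)
  then show ?thesis by (auto simp: Pplus_iff_poly)
qed

lemma constant_if_Pplus_and_cnj_Pplus:
  assumes "S \<in> Pplus" and "(\<lambda>z. cnj (S z)) \<in> Pplus"
  shows "\<exists>c. \<forall>z\<in>circle. S z = c"
proof -
  obtain A where A: "\<forall>z\<in>circle. S z = poly A z"
    using assms(1) by (auto simp: Pplus_iff_poly)
  obtain B where B: "\<forall>z\<in>circle. cnj (S z) = poly B z"
    using assms(2) by (auto simp: Pplus_iff_poly)
  have AB: "monom 1 (degree B) * A = reflect_poly (map_poly cnj B)"
  proof (rule poly_eq_if_eq_on_circle, intro ballI)
    fix z assume "z \<in> circle"
    then have "poly A z = cnj (poly B z)"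
      using A B by (metis complex_cnj_cnj)
    then show "poly (monom 1 (degree B) * A) z = poly (reflect_poly (map_poly cnj B)) z"
      using \<open>z \<in> circle\<close> by (simp add: poly_monom flip: cnj_poly_on_circle)
  qed
  have "degree A = 0"
  proof (cases "A = 0")
    case False
    have "degree B + degree A = degree (reflect_poly (map_poly cnj B))"
      by (simp flip: AB add: degree_mult_eq degree_monom_eq False)
    also have "\<dots> \<le> degree B"
      using degree_reflect_poly_le[of "map_poly cnj B"] by (simp add: degree_map_poly)
    finally show ?thesis by simp
  qed simp
  then obtain c where "A = [:c:]" by (rule degree_eq_zeroE)
  then show ?thesis using A by auto
qed

definition herm_form ::
  "nat \<Rightarrow> (nat \<Rightarrow> int) \<Rightarrow> (nat \<Rightarrow> complex \<Rightarrow> complex) \<Rightarrow> (nat \<Rightarrow> complex \<Rightarrow> complex)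
     \<Rightarrow> complex \<Rightarrow> complex" where
  "herm_form m J x y =
     (\<lambda>z. (\<Sum>k=1..m-1. of_int (J k) * x k z * tilde (y k) z) + tilde (x m) z * y m z)"

lemma herm_form_swap: "herm_form m J y x z = cnj (herm_form m J x y z)"
  by (simp add: herm_form_def tilde_def cnj_sum mult.commute mult.left_commute)

lemma laurent_on_circle_herm_form:
  assumes "m \<ge> 1" and "\<forall>i\<in>{1..m}. x i \<in> Pplus" and "\<forall>i\<in>{1..m}. y i \<in> Pplus"
  shows "laurent_on_circle (herm_form m J x y)"
  unfolding herm_form_def tilde_def using assms
  by (intro laurent_on_circle_add laurent_on_circle_sum laurent_on_circle_mult
      laurent_on_circle_const laurent_on_circle_if_Pplus laurent_on_circle_cnj) auto

lemma mult_herm_form_Pplus: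
  assumes "m \<ge> 1" and "\<forall>i\<in>{1..m}. x i \<in> Pplus" and "\<forall>i\<in>{1..m}. y i \<in> Pplus"
    and "is_solution m J \<zeta> f x" and "is_solution m J \<zeta> f y"
  shows "(\<lambda>z. f z * herm_form m J x y z) \<in> Pplus"
proof -
  define B where "B = (\<lambda>z. (\<Sum>k=1..m-1. \<zeta> k z * x k z) + f z * tilde (x m) z)"
  define A where "A = (\<lambda>k z. \<zeta> k z * y m z - of_int (J k) * f z * tilde (y k) z)"
  have "B \<in> Pplus" and "\<forall>k\<in>{1..m-1}. A k \<in> Pplus" and "y m \<in> Pplus"
    using assms by (auto simp: is_solution_def A_def B_def)
  then have "(\<lambda>z. y m z * B z - (\<Sum>k=1..m-1. x k z * A k z)) \<in> Pplus"
    using assms(2) by (intro Pplus_diff Pplus_mult Pplus_sum) auto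
  moreover have "f z * herm_form m J x y z = y m z * B z - (\<Sum>k=1..m-1. x k z * A k z)" for z
  proof -
    have "(\<Sum>k=1..m-1. x k z * A k z) = y m z * (\<Sum>k=1..m-1. \<zeta> k z * x k z)
        - f z * (\<Sum>k=1..m-1. of_int (J k) * x k z * tilde (y k) z)"
      by (simp add: A_def sum_distrib_left sum_subtractf[symmetric] algebra_simps)
    then show ?thesis
      by (simp add: herm_form_def B_def algebra_simps)
  qed
  ultimately show ?thesis by simp
qed

lemma herm_form_Pplus:
  assumes "m \<ge> 1" and "poly_at_zero_nonzero f"
    and "\<forall>i\<in>{1..m}. x i \<in> Pplus" and "\<forall>i\<in>{1..m}. y i \<in> Pplus"
    and "is_solution m J \<zeta> f x" and "is_solution m J \<zeta> f y"
  shows "herm_form m J x y \<in> Pplus"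
proof (rule Pplus_if_mult_Pplus)
  show "laurent_on_circle (herm_form m J x y)"
    using assms(1,3,4) by (rule laurent_on_circle_herm_form)
  show "(\<lambda>z. f z * herm_form m J x y z) \<in> Pplus"
    using assms(1,3-6) by (rule mult_herm_form_Pplus)
qed fact

theorem lemma1:
  fixes m N :: nat and J :: "nat \<Rightarrow> int"
    and \<zeta> :: "nat \<Rightarrow> complex \<Rightarrow> complex" and f :: "complex \<Rightarrow> complex"
    and u v :: "nat \<Rightarrow> complex \<Rightarrow> complex"
  assumes "m \<ge> 2" and "N \<ge> 1"
    and "\<forall>k\<in>{1..m-1}. J k = 1 \<or> J k = -1"
    and "\<forall>k\<in>{1..m-1}. \<zeta> k \<in> PminusN N"
    and "f \<in> PplusN N" and "poly_at_zero_nonzero f"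
    and "\<forall>i\<in>{1..m}. u i \<in> PplusN N"
    and "\<forall>i\<in>{1..m}. v i \<in> PplusN N"
    and "is_solution m J \<zeta> f u" and "is_solution m J \<zeta> f v"
  shows "\<exists>c. \<forall>z\<in>circle.
    (\<Sum>k=1..m-1. of_int (J k) * u k z * tilde (v k) z) + tilde (u m) z * v m z = c"
proof -
  have "m \<ge> 1" using \<open>m \<ge> 2\<close> by simp
  have u: "\<forall>i\<in>{1..m}. u i \<in> Pplus" and v: "\<forall>i\<in>{1..m}. v i \<in> Pplus"
    using assms(7,8) by (auto simp: PplusN_def)
  have "herm_form m J u v \<in> Pplus"
    using herm_form_Pplus[OF \<open>m \<ge> 1\<close> assms(6) u v assms(9,10)] .
  moreover have "(\<lambda>z. cnj (herm_form m J u v z)) \<in> Pplus"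
    using herm_form_Pplus[OF \<open>m \<ge> 1\<close> assms(6) v u assms(10,9)]
    by (simp flip: herm_form_swap)
  ultimately show ?thesis
    unfolding herm_form_def by (rule constant_if_Pplus_and_cnj_Pplus)
qed

end
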